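(* Let $p$ be an odd prime, $n\ge1$, $G=\mu_{p^n}$, $\alpha$ an integer whose class generates $(\mathbb{Z}/p^n\mathbb{Z})^\times$, and $\mathcal{P}$ a unital partition of $G$. Let $0\le k\le n$, $A\in\mathcal{P}_k$, $y\in A\cap B_k$, and let $u_k$ be the smallest positive integer with $y^{\alpha^{u_k}}\in A$. Then $u_k$ divides $\phi(p^{n-k})$.
   Context: A unital partition of a finite commutative group $G$ is a partition $G=\{1\}\sqcup A_0\sqcup\dots\sqcup A_s$ such that, with $a_i=\sum_{x\in A_i}x\in\mathbb{Z}[G]$, the $\mathbb{Z}$-span of $1$ and the $a_i$ is closed under multiplication in $\mathbb{Z}[G]$. $B_k=\{x^{p^k}\mid x\text{ a generator of }G\}$, $\mathcal{P}_k=\{A\in\mathcal{P}\mid A\cap B_k\neq\emptyset\}$, and $\phi$ is Euler's totient function. *)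

theory Defs
  imports "HOL-Number_Theory.Number_Theory"
begin

definition mu :: "nat \<Rightarrow> complex set" where
  "mu m = {z. z ^ m = 1}"

text \<open>Elements of the group ring Z[G] are functions G -> int (supported on G);
  multiplication is convolution.\<close>
definition gr_mult :: "complex set \<Rightarrow> (complex \<Rightarrow> int) \<Rightarrow> (complex \<Rightarrow> int) \<Rightarrow> complex \<Rightarrow> int" where
  "gr_mult G f g = (\<lambda>z. \<Sum>x\<in>G. \<Sum>y\<in>G. if x * y = z then f x * g y else 0)"

text \<open>Z-span of 1 and the class sums a_A (A in P).\<close>
definition zspan :: "complex set set \<Rightarrow> (complex \<Rightarrow> int) set" where
  "zspan P = {f. \<exists>(c0::int) (c::complex set \<Rightarrow> int).
      f = (\<lambda>z. c0 * of_bool (z = 1) + (\<Sum>A\<in>P. c A * of_bool (z \<in> A)))}"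

definition unital_partition :: "complex set \<Rightarrow> complex set set \<Rightarrow> bool" where
  "unital_partition G P \<longleftrightarrow>
     finite P \<and> (\<forall>A\<in>P. A \<noteq> {}) \<and> (\<forall>A\<in>P. \<forall>B\<in>P. A \<noteq> B \<longrightarrow> A \<inter> B = {}) \<and> \<Union>P = G - {1} \<and>
     (\<forall>f\<in>zspan P. \<forall>g\<in>zspan P. gr_mult G f g \<in> zspan P)"

definition is_generator :: "complex set \<Rightarrow> complex \<Rightarrow> bool" where
  "is_generator G x \<longleftrightarrow> x \<in> G \<and> (\<forall>z\<in>G. \<exists>m::nat. z = x ^ m)"

definition Bk :: "complex set \<Rightarrow> nat \<Rightarrow> nat \<Rightarrow> complex set" where
  "Bk G p k = {x ^ (p ^ k) | x. is_generator G x}"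

definition Pk :: "complex set \<Rightarrow> complex set set \<Rightarrow> nat \<Rightarrow> nat \<Rightarrow> complex set set" where
  "Pk G P p k = {A \<in> P. A \<inter> Bk G p k \<noteq> {}}"

end

theory Submission
  imports Defs "HOL-Computational_Algebra.Polynomial"
begin

(*
  In the locale unital_partition_mu we prove Schur's theorem: for m coprime to N the
  power map x \<mapsto> x^m sends every block of P onto a block.  For a prime q, the q-th
  power of the class sum of B lies in the span of the class sums, so it is constant
  on blocks, and it is congruent mod q to the indicator of B^q; hence every block
  meeting B^q lies inside B^q.  This "multiplier" property is closed under products,
  so it holds for all m coprime to N, and the inverse exponent m^(phi N - 1) turns the
  inclusion into an equality.

  Return times: if y lies in the block A and y^(m^d) is again in A, Schur's theorem
  shows that x \<mapsto> x^(m^d) fixes A, so the set of u with y^(m^u) in A is stable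
  under subtracting d.  An elementary lemma on such sets of naturals then shows that
  the least positive return time divides phi(M) whenever y^M = 1, because y^(m^phi(M))
  = y by Euler's theorem.  The main theorem takes N = p^n, M = p^(n-k), and m a
  natural representative of alpha modulo p^n (so that y^(alpha^u) = y^(m^u)).
*)

section \<open>Frobenius congruence in commutative rings\<close>

lemma add_power_prime:
  fixes a b :: "'a::comm_ring_1"
  assumes q: "prime q"
  shows "\<exists>c. (a + b) ^ q = a ^ q + b ^ q + of_nat q * c"
proof -
  have q0: "q > 0" using q prime_gt_0_nat by blast
  have "(a + b) ^ q = (\<Sum>k\<le>q. of_nat (q choose k) * a ^ k * b ^ (q - k))"
    by (rule binomial_ring)
  also have "{..q} = {0, q} \<union> {1..<q}" by auto
  also have "(\<Sum>k\<in>{0, q} \<union> {1..<q}. of_nat (q choose k) * a ^ k * b ^ (q - k))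
     = (\<Sum>k\<in>{0, q}. of_nat (q choose k) * a ^ k * b ^ (q - k))
       + (\<Sum>k\<in>{1..<q}. of_nat (q choose k) * a ^ k * b ^ (q - k))"
    by (rule sum.union_disjoint) auto
  also have "(\<Sum>k\<in>{0, q}. of_nat (q choose k) * a ^ k * b ^ (q - k)) = a ^ q + b ^ q"
    using q0 by (simp add: add.commute)
  also have "(\<Sum>k\<in>{1..<q}. of_nat (q choose k) * a ^ k * b ^ (q - k))
      = of_nat q * (\<Sum>k\<in>{1..<q}. of_nat ((q choose k) div q) * a ^ k * b ^ (q - k))"
    unfolding sum_distrib_left
  proof (rule sum.cong)
    fix k assume "k \<in> {1..<q}"
    hence "q dvd (q choose k)" using q by (intro dvd_choose_prime) auto
    hence "(of_nat (q choose k) :: 'a) = of_nat q * of_nat ((q choose k) div q)"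
      by (metis dvd_mult_div_cancel of_nat_mult)
    thus "of_nat (q choose k) * a ^ k * b ^ (q - k)
        = of_nat q * (of_nat ((q choose k) div q) * a ^ k * b ^ (q - k))"
      by (simp add: mult.assoc)
  qed simp
  finally show ?thesis by blast
qed

lemma sum_power_prime:
  fixes r :: "'b \<Rightarrow> 'a::comm_ring_1"
  assumes q: "prime q" and S: "finite S"
  shows "\<exists>c. (\<Sum>i\<in>S. r i) ^ q = (\<Sum>i\<in>S. r i ^ q) + of_nat q * c"
  using S
proof (induction S rule: finite_induct)
  case empty
  have "q > 0" using q prime_gt_0_nat by blast
  thus ?case by (intro exI[of _ 0]) (simp add: zero_power)
next
  case (insert x F)
  then obtain c1 where c1: "(\<Sum>i\<in>F. r i) ^ q = (\<Sum>i\<in>F. r i ^ q) + of_nat q * c1" by blast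
  obtain c2 where c2: "(r x + (\<Sum>i\<in>F. r i)) ^ q = r x ^ q + (\<Sum>i\<in>F. r i) ^ q + of_nat q * c2"
    using add_power_prime[OF q] by blast
  show ?case using insert c1 c2
    by (intro exI[of _ "c1 + c2"]) (simp add: algebra_simps)
qed

lemma gr_mult_sum_left:
  assumes "finite I"
  shows "gr_mult G (\<lambda>z. \<Sum>i\<in>I. f i z) g z = (\<Sum>i\<in>I. gr_mult G (f i) g z)"
  unfolding gr_mult_def sum_distrib_right
  by (subst sum.swap, rule sum.cong[OF refl], subst sum.swap) (auto intro!: sum.cong)

lemma gr_mult_sum_right:
  assumes "finite I"
  shows "gr_mult G f (\<lambda>z. \<Sum>i\<in>I. g i z) z = (\<Sum>i\<in>I. gr_mult G f (g i) z)"
  unfolding gr_mult_def sum_distrib_left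
  by (subst sum.swap, rule sum.cong[OF refl], subst sum.swap) (auto intro!: sum.cong)

lemma gr_mult_delta:
  assumes "finite G" "u \<in> G" "v \<in> G"
  shows "gr_mult G (\<lambda>z. if u = z then a else 0) (\<lambda>z. if v = z then b else 0) z
       = (if u * v = z then a * b else 0)"
proof -
  have "gr_mult G (\<lambda>z. if u = z then a else 0) (\<lambda>z. if v = z then b else 0) z
      = (\<Sum>x\<in>G. if u = x then (\<Sum>y\<in>G. if v = y then (if u * y = z then a * b else 0) else 0) else 0)"
    unfolding gr_mult_def by (intro sum.cong) (auto intro!: sum.cong sum.neutral)
  thus ?thesis using assms by simp
qed

section \<open>From integer polynomials to the group ring\<close>

text \<open>Evaluating X at zeta: the polynomial F is sent to the group-ring element
  z \<mapsto> \<Sum> {coeff F i | zeta^i = z}.\<close>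
definition gr_of_poly :: "complex \<Rightarrow> int poly \<Rightarrow> complex \<Rightarrow> int" where
  "gr_of_poly \<zeta> F = (\<lambda>z. \<Sum>i\<le>degree F. if \<zeta> ^ i = z then coeff F i else 0)"

lemma gr_of_poly_bound:
  assumes "degree F \<le> D"
  shows "gr_of_poly \<zeta> F z = (\<Sum>i\<le>D. if \<zeta> ^ i = z then coeff F i else 0)"
  unfolding gr_of_poly_def using assms
  by (intro sum.mono_neutral_left) (auto simp: coeff_eq_0)

lemma gr_of_poly_add: "gr_of_poly \<zeta> (F + H) z = gr_of_poly \<zeta> F z + gr_of_poly \<zeta> H z"
proof -
  let ?D = "max (degree F) (degree H)"
  have "degree (F + H) \<le> ?D" by (rule degree_add_le) auto
  thus ?thesis
    by (simp add: gr_of_poly_bound[of _ ?D] gr_of_poly_bound[of F ?D] gr_of_poly_bound[of H ?D]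
        flip: sum.distrib) (rule sum.cong, auto)
qed

lemma gr_of_poly_zero: "gr_of_poly \<zeta> 0 z = 0"
  by (auto simp: gr_of_poly_def intro!: sum.neutral)

lemma gr_of_poly_sum:
  "finite I \<Longrightarrow> gr_of_poly \<zeta> (\<Sum>i\<in>I. F i) z = (\<Sum>i\<in>I. gr_of_poly \<zeta> (F i) z)"
  by (induction I rule: finite_induct) (auto simp: gr_of_poly_add gr_of_poly_zero)

lemma gr_of_poly_monom: "gr_of_poly \<zeta> (monom c k) z = (if \<zeta> ^ k = z then c else 0)"
proof -
  have "gr_of_poly \<zeta> (monom c k) z = (\<Sum>i\<le>k. if \<zeta> ^ i = z then coeff (monom c k) i else 0)"
    by (rule gr_of_poly_bound) (simp add: degree_monom_le)
  also have "\<dots> = (\<Sum>i\<le>k. if i = k then (if \<zeta> ^ k = z then c else 0) else 0)"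
    by (rule sum.cong) (auto simp: coeff_monom)
  finally show ?thesis by simp
qed

lemma gr_of_poly_of_nat_mult: "gr_of_poly \<zeta> (of_nat q * C) z = int q * gr_of_poly \<zeta> C z"
proof (cases "q = 0")
  case False
  have "of_nat q * C = smult (int q) C" by (simp add: of_nat_poly)
  thus ?thesis using False by (auto simp: gr_of_poly_def sum_distrib_left intro!: sum.cong)
qed (simp add: gr_of_poly_zero)

lemma gr_of_poly_one: "gr_of_poly \<zeta> 1 = (\<lambda>z. of_bool (z = 1))"
  by (auto simp: gr_of_poly_def fun_eq_iff)

lemma gr_of_poly_mult:
  assumes G: "finite G" "\<And>i. \<zeta> ^ i \<in> G"
  shows "gr_of_poly \<zeta> (F * H) z = gr_mult G (gr_of_poly \<zeta> F) (gr_of_poly \<zeta> H) z"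
proof -
  have "F * H = (\<Sum>i\<le>degree F. monom (coeff F i) i) * (\<Sum>j\<le>degree H. monom (coeff H j) j)"
    by (simp add: poly_as_sum_of_monoms)
  also have "\<dots> = (\<Sum>i\<le>degree F. \<Sum>j\<le>degree H. monom (coeff F i * coeff H j) (i + j))"
    by (simp add: sum_product mult_monom)
  finally have "gr_of_poly \<zeta> (F * H) z
      = (\<Sum>i\<le>degree F. \<Sum>j\<le>degree H. if \<zeta> ^ (i + j) = z then coeff F i * coeff H j else 0)"
    by (simp add: gr_of_poly_sum gr_of_poly_monom)
  also have "\<dots> = (\<Sum>i\<le>degree F. \<Sum>j\<le>degree H. gr_mult G
        (\<lambda>z. if \<zeta> ^ i = z then coeff F i else 0) (\<lambda>z. if \<zeta> ^ j = z then coeff H j else 0) z)"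
    using G by (simp add: gr_mult_delta power_add)
  also have "\<dots> = gr_mult G (gr_of_poly \<zeta> F) (gr_of_poly \<zeta> H) z"
    by (simp add: gr_of_poly_def gr_mult_sum_left gr_mult_sum_right)
  finally show ?thesis .
qed

section \<open>Roots of unity\<close>

lemma mu_finite: "N > 0 \<Longrightarrow> finite (mu N)"
  unfolding mu_def by (intro finite_roots_unity) simp

lemma mu_power: "x \<in> mu N \<Longrightarrow> x ^ q \<in> mu N"
proof -
  assume "x \<in> mu N"
  have "(x ^ q) ^ N = (x ^ N) ^ q" by (simp only: mult.commute flip: power_mult)
  thus ?thesis using \<open>x \<in> mu N\<close> by (simp add: mu_def)
qed

lemma mu_power_mod:
  assumes "x \<in> mu N"
  shows "x ^ m = x ^ (m mod N)"
proof -
  have "x ^ m = (x ^ N) ^ (m div N) * x ^ (m mod N)"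
    by (metis div_mult_mod_eq power_add power_mult mult.commute)
  thus ?thesis using assms by (simp add: mu_def)
qed

lemma mu_powi_mod:
  assumes "x \<in> mu N" "N > 0"
  shows "x powi j = x ^ nat (j mod int N)"
proof -
  have x0: "x \<noteq> 0" using assms by (auto simp: mu_def zero_power)
  have "x powi j = x powi (int N * (j div int N)) * x powi (j mod int N)"
    using x0 by (simp flip: power_int_add)
  also have "x powi (int N * (j div int N)) = (x ^ N) powi (j div int N)"
    by (simp only: power_int_mult power_int_of_nat)
  also have "x powi (j mod int N) = x ^ nat (j mod int N)"
    using assms(2) by (metis power_int_of_nat pos_mod_sign of_nat_0_less_iff nat_0_le)
  finally show ?thesis using assms(1) by (simp add: mu_def)
qed

lemma mu_powi_power:
  fixes \<alpha> :: int
  assumes "x \<in> mu N" "N > 0" "[int m = \<alpha>] (mod int N)"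
  shows "x powi (\<alpha> ^ u) = x ^ (m ^ u)"
proof -
  have "\<alpha> ^ u mod int N = int (m ^ u mod N)"
    using cong_pow[OF assms(3), of u] by (simp add: cong_def of_nat_mod)
  hence "x powi (\<alpha> ^ u) = x ^ (m ^ u mod N)" using mu_powi_mod[OF assms(1,2)] by simp
  also have "\<dots> = x ^ (m ^ u)" using mu_power_mod[OF assms(1)] by simp
  finally show ?thesis .
qed

lemma mu_power_totient:
  assumes "coprime m N" "x \<in> mu N"
  shows "x ^ (m ^ totient N) = x"
proof -
  have "m ^ totient N mod N = 1 mod N"
    using euler_theorem[OF assms(1)] by (simp add: cong_def)
  thus ?thesis using mu_power_mod[OF assms(2)] by (metis power_one_right)
qed

lemma mu_power_inverse:
  assumes "coprime m N" "N > 0" "x \<in> mu N"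
  shows "(x ^ m) ^ (m ^ (totient N - 1)) = x"
proof -
  have "Suc (totient N - 1) = totient N" using assms(2) by simp
  hence "m * m ^ (totient N - 1) = m ^ totient N" by (metis power_Suc)
  thus ?thesis using mu_power_totient[OF assms(1,3)] by (simp flip: power_mult)
qed

lemma mu_power_inj:
  assumes "coprime m N" "N > 0"
  shows "inj_on (\<lambda>x. x ^ m) (mu N)"
  by (rule inj_on_inverseI[where g = "\<lambda>y. y ^ (m ^ (totient N - 1))"])
    (rule mu_power_inverse[OF assms])

definition prim_root :: "nat \<Rightarrow> complex" where
  "prim_root N = cis (2 * pi / real N)"

lemma prim_root_bij: "N > 0 \<Longrightarrow> bij_betw (\<lambda>i. prim_root N ^ i) {..<N} (mu N)"
  using bij_betw_roots_unity[of N] unfolding mu_def prim_root_def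
  by (simp add: DeMoivre mult.commute)

lemma prim_root_in_mu: "N > 0 \<Longrightarrow> prim_root N \<in> mu N"
  unfolding mu_def prim_root_def by (simp add: DeMoivre)

lemma Bk_in_mu:
  assumes "y \<in> Bk (mu (p ^ n)) p k" "k \<le> n"
  shows "y \<in> mu (p ^ (n - k))"
proof -
  obtain x where x: "x \<in> mu (p ^ n)" "y = x ^ (p ^ k)"
    using assms(1) unfolding Bk_def is_generator_def by blast
  have "y ^ p ^ (n - k) = x ^ p ^ n"
    using assms(2) by (simp add: x(2) flip: power_mult power_add)
  thus ?thesis using x(1) by (simp add: mu_def)
qed

section \<open>Return times\<close>

lemma least_return_time_dvd:
  fixes Q :: "nat \<Rightarrow> bool"
  assumes Qt: "Q t" "0 < t" and shift: "\<And>u d. 0 < d \<Longrightarrow> Q d \<Longrightarrow> Q (u + d) \<Longrightarrow> Q u"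
  shows "(LEAST d. 0 < d \<and> Q d) dvd t"
proof -
  define d where "d = (LEAST d. 0 < d \<and> Q d)"
  have d: "0 < d" "Q d" using LeastI[of "\<lambda>d. 0 < d \<and> Q d" t] Qt unfolding d_def by blast+
  have descend: "Q (u + s * d) \<Longrightarrow> Q u" for u s
  proof (induction s)
    case (Suc s)
    have "u + Suc s * d = (u + s * d) + d" by simp
    hence "Q ((u + s * d) + d)" using Suc.prems by (simp only:)
    thus ?case using Suc.IH shift[OF d] by blast
  qed simp
  have "Q (t mod d)" using descend[of "t mod d" "t div d"] Qt(1) by (simp add: mod_div_mult_eq)
  moreover have "t mod d < d" using d(1) by simp
  ultimately have "t mod d = 0" using not_less_Least[of "t mod d" "\<lambda>d. 0 < d \<and> Q d"]
    unfolding d_def by auto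
  thus ?thesis by (simp add: d_def mod_eq_0_iff_dvd)
qed

section \<open>Unital partitions of mu_N and Schur's multiplier theorem\<close>

locale unital_partition_mu =
  fixes N :: nat and P :: "complex set set"
  assumes N_pos: "N > 0" and unital: "unital_partition (mu N) P"
begin

abbreviation G :: "complex set" where "G \<equiv> mu N"

abbreviation \<zeta> :: complex where "\<zeta> \<equiv> prim_root N"

lemma blocks_finite: "finite P"
  using unital by (simp add: unital_partition_def)

lemma block_nonempty: "B \<in> P \<Longrightarrow> B \<noteq> {}"
  using unital by (simp add: unital_partition_def)

lemma blocks_disjoint: "B \<in> P \<Longrightarrow> C \<in> P \<Longrightarrow> B \<noteq> C \<Longrightarrow> B \<inter> C = {}"
  using unital by (simp add: unital_partition_def)

lemma blocks_cover: "\<Union>P = G - {1}"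
  using unital by (simp add: unital_partition_def)

lemma zspan_mult: "f \<in> zspan P \<Longrightarrow> g \<in> zspan P \<Longrightarrow> gr_mult G f g \<in> zspan P"
  using unital by (simp add: unital_partition_def)

lemma block_subset: "B \<in> P \<Longrightarrow> B \<subseteq> G - {1}"
  using blocks_cover by blast

lemma block_eq: "B \<in> P \<Longrightarrow> C \<in> P \<Longrightarrow> B \<inter> C \<noteq> {} \<Longrightarrow> B = C"
  using blocks_disjoint by blast

lemma zspan_const_on_block:
  assumes "f \<in> zspan P" "C \<in> P" "z \<in> C" "z' \<in> C"
  shows "f z = f z'"
proof -
  obtain c0 c where f: "f = (\<lambda>z. c0 * of_bool (z = 1) + (\<Sum>A\<in>P. c A * of_bool (z \<in> A)))"
    using assms(1) unfolding zspan_def by blast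
  have "f w = c C" if "w \<in> C" for w
  proof -
    have "(\<Sum>A\<in>P. c A * of_bool (w \<in> A)) = (\<Sum>A\<in>P. if C = A then c C else 0)"
      using assms(2) that block_eq by (intro sum.cong) auto
    moreover have "w \<noteq> 1" using block_subset[OF assms(2)] that by auto
    ultimately show ?thesis using f blocks_finite assms(2) by simp
  qed
  thus ?thesis using assms by simp
qed

lemma one_in_zspan: "(\<lambda>z. of_bool (z = 1)) \<in> zspan P"
  unfolding zspan_def by (intro CollectI exI[of _ 1] exI[of _ "\<lambda>_. 0"]) simp

lemma indicator_in_zspan:
  assumes "B \<in> P"
  shows "(\<lambda>z. of_bool (z \<in> B)) \<in> zspan P"
  unfolding zspan_def
proof (intro CollectI exI[of _ 0] exI[of _ "\<lambda>A. of_bool (A = B)"] ext)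
  fix z
  have "(\<Sum>A\<in>P. of_bool (A = B) * of_bool (z \<in> A)) = (\<Sum>A\<in>P. if B = A then of_bool (z \<in> B) else (0::int))"
    by (intro sum.cong) auto
  thus "(of_bool (z \<in> B) :: int) = 0 * of_bool (z = 1) + (\<Sum>A\<in>P. of_bool (A = B) * of_bool (z \<in> A))"
    using blocks_finite assms by simp
qed

lemma sum_over_mu: "(\<Sum>i<N. g (\<zeta> ^ i)) = (\<Sum>x\<in>G. g x)"
  using sum.reindex_bij_betw[OF prim_root_bij[OF N_pos], of g] .

definition class_poly :: "complex set \<Rightarrow> int poly" where
  "class_poly B = (\<Sum>i<N. monom (of_bool (\<zeta> ^ i \<in> B)) i)"

lemma gr_of_class_poly:
  assumes "B \<subseteq> G"
  shows "gr_of_poly \<zeta> (class_poly B) z = of_bool (z \<in> B)"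
proof -
  have "gr_of_poly \<zeta> (class_poly B) z = (\<Sum>i<N. (\<lambda>x. if x = z then of_bool (x \<in> B) else 0) (\<zeta> ^ i))"
    by (simp add: class_poly_def gr_of_poly_sum gr_of_poly_monom)
  also have "\<dots> = (\<Sum>x\<in>G. if x = z then of_bool (x \<in> B) else 0)"
    by (rule sum_over_mu)
  also have "\<dots> = of_bool (z \<in> B)" using mu_finite[OF N_pos] assms by auto
  finally show ?thesis .
qed

lemma class_poly_power_in_zspan:
  assumes "B \<in> P"
  shows "gr_of_poly \<zeta> (class_poly B ^ k) \<in> zspan P"
proof (induction k)
  case 0 thus ?case using one_in_zspan by (simp add: gr_of_poly_one)
next
  case (Suc k)
  have "gr_of_poly \<zeta> (class_poly B ^ Suc k)
      = gr_mult G (gr_of_poly \<zeta> (class_poly B)) (gr_of_poly \<zeta> (class_poly B ^ k))"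
    using mu_finite[OF N_pos] mu_power[OF prim_root_in_mu[OF N_pos]]
    by (intro ext) (simp add: gr_of_poly_mult)
  also have "gr_of_poly \<zeta> (class_poly B) = (\<lambda>z. of_bool (z \<in> B))"
    using gr_of_class_poly block_subset[OF assms] by blast
  finally show ?case using zspan_mult[OF indicator_in_zspan[OF assms] Suc.IH] by simp
qed

text \<open>Counting the exponents i < N with zeta^i in B and (zeta^i)^q = z gives the
  indicator of the image B^q, since x \<mapsto> x^q is injective for q coprime to N.\<close>
lemma sum_power_indicator:
  assumes q: "coprime q N" and B: "B \<subseteq> G"
  shows "(\<Sum>i<N. if \<zeta> ^ (i * q) = z then of_bool (\<zeta> ^ i \<in> B) else 0)
      = (of_bool (z \<in> (\<lambda>x. x ^ q) ` B) :: int)"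
proof -
  have "(\<Sum>i<N. if \<zeta> ^ (i * q) = z then of_bool (\<zeta> ^ i \<in> B) else 0)
      = (\<Sum>x\<in>G. if x \<in> B \<and> x ^ q = z then 1 else (0::int))"
    by (subst sum_over_mu[symmetric]) (intro sum.cong refl, simp add: power_mult)
  also have "\<dots> = (\<Sum>x\<in>B. if x ^ q = z then 1 else 0)"
    using mu_finite[OF N_pos] B by (intro sum.mono_neutral_cong_right) auto
  also have "\<dots> = of_bool (z \<in> (\<lambda>x. x ^ q) ` B)"
  proof (cases "z \<in> (\<lambda>x. x ^ q) ` B")
    case True
    then obtain b where b: "b \<in> B" "z = b ^ q" by auto
    have root_unique: "x = b" if "x \<in> B" "x ^ q = b ^ q" for x
      using inj_onD[OF mu_power_inj[OF q N_pos] that(2)] that(1) b(1) B by blast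
    have "(\<Sum>x\<in>B. if x ^ q = z then 1 else (0::int)) = (\<Sum>x\<in>B. if b = x then 1 else 0)"
      using b(2) by (intro sum.cong) (auto dest: root_unique)
    thus ?thesis using True b finite_subset[OF B mu_finite[OF N_pos]] by simp
  qed (auto intro!: sum.neutral)
  finally show ?thesis .
qed

lemma class_poly_power_prime:
  assumes q: "prime q" "coprime q N" and B: "B \<subseteq> G"
  shows "\<exists>d. \<forall>z. gr_of_poly \<zeta> (class_poly B ^ q) z = of_bool (z \<in> (\<lambda>x. x ^ q) ` B) + int q * d z"
proof -
  have q0: "q > 0" using q prime_gt_0_nat by blast
  obtain C where C: "class_poly B ^ q = (\<Sum>i<N. monom (of_bool (\<zeta> ^ i \<in> B)) i ^ q) + of_nat q * C"
    unfolding class_poly_def using sum_power_prime[OF q(1), of "{..<N}"] by auto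
  have "(of_bool b :: int) ^ q = of_bool b" for b using q0 by (cases b) (auto simp: zero_power)
  hence "gr_of_poly \<zeta> (class_poly B ^ q) z
      = (\<Sum>i<N. if \<zeta> ^ (i * q) = z then of_bool (\<zeta> ^ i \<in> B) else 0) + int q * gr_of_poly \<zeta> C z" for z
    by (simp add: C monom_power gr_of_poly_add gr_of_poly_sum gr_of_poly_monom gr_of_poly_of_nat_mult)
  moreover have "(\<Sum>i<N. if \<zeta> ^ (i * q) = z then of_bool (\<zeta> ^ i \<in> B) else 0)
      = (of_bool (z \<in> (\<lambda>x. x ^ q) ` B) :: int)" for z
    using q(2) B by (rule sum_power_indicator)
  ultimately show ?thesis by (intro exI[of _ "gr_of_poly \<zeta> C"]) auto
qed

definition multiplier :: "nat \<Rightarrow> bool" where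
  "multiplier m \<longleftrightarrow> (\<forall>B\<in>P. (\<lambda>x. x ^ m) ` B \<subseteq> G - {1} \<and>
      (\<forall>C\<in>P. C \<inter> (\<lambda>x. x ^ m) ` B \<noteq> {} \<longrightarrow> C \<subseteq> (\<lambda>x. x ^ m) ` B))"

lemma multiplier_image_sub:
  "multiplier m \<Longrightarrow> B \<in> P \<Longrightarrow> (\<lambda>x. x ^ m) ` B \<subseteq> G - {1}"
  unfolding multiplier_def by blast

lemma multiplier_block_sub:
  "multiplier m \<Longrightarrow> B \<in> P \<Longrightarrow> C \<in> P \<Longrightarrow> C \<inter> (\<lambda>x. x ^ m) ` B \<noteq> {} \<Longrightarrow> C \<subseteq> (\<lambda>x. x ^ m) ` B"
  unfolding multiplier_def by blast

text \<open>Primes coprime to N are multipliers: a block meeting B^q but not contained in it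
  would make the q-th power of the class sum of B take values differing by 1 modulo q
  on that block, although it is constant there.\<close>
lemma prime_multiplier:
  assumes q: "prime q" "coprime q N"
  shows "multiplier q"
  unfolding multiplier_def
proof (intro ballI conjI impI)
  fix B assume B: "B \<in> P"
  have BG: "B \<subseteq> G" using block_subset[OF B] by blast
  show "(\<lambda>x. x ^ q) ` B \<subseteq> G - {1}"
  proof
    fix w assume "w \<in> (\<lambda>x. x ^ q) ` B"
    then obtain x where x: "x \<in> B" "w = x ^ q" by blast
    have "x \<in> G" "x \<noteq> 1" using block_subset[OF B] x(1) by auto
    moreover have "(1::complex) \<in> G" by (simp add: mu_def)
    ultimately have "x ^ q \<noteq> 1 ^ q"
      using inj_onD[OF mu_power_inj[OF q(2) N_pos], of x 1] by auto
    thus "w \<in> G - {1}" using mu_power[OF \<open>x \<in> G\<close>] x(2) by simp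
  qed
  fix C assume C: "C \<in> P" "C \<inter> (\<lambda>x. x ^ q) ` B \<noteq> {}"
  then obtain z0 where z0: "z0 \<in> C" "z0 \<in> (\<lambda>x. x ^ q) ` B" by blast
  obtain d where d: "\<And>z. gr_of_poly \<zeta> (class_poly B ^ q) z = of_bool (z \<in> (\<lambda>x. x ^ q) ` B) + int q * d z"
    using class_poly_power_prime[OF q BG] by blast
  show "C \<subseteq> (\<lambda>x. x ^ q) ` B"
  proof
    fix z assume z: "z \<in> C"
    show "z \<in> (\<lambda>x. x ^ q) ` B"
    proof (rule ccontr)
      assume "z \<notin> (\<lambda>x. x ^ q) ` B"
      moreover have "gr_of_poly \<zeta> (class_poly B ^ q) z = gr_of_poly \<zeta> (class_poly B ^ q) z0"
        using zspan_const_on_block[OF class_poly_power_in_zspan[OF B] C(1) z z0(1)] .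
      ultimately have "int q * (d z - d z0) = 1" using d[of z] d[of z0] z0(2) by (simp add: algebra_simps)
      hence "int q dvd 1" by (metis dvd_triv_left)
      hence "q = 1" by simp
      thus False using q(1) by simp
    qed
  qed
qed

lemma multiplier_1: "multiplier 1"
  unfolding multiplier_def using block_subset block_eq by auto

lemma multiplier_mult:
  assumes a: "multiplier a" and b: "multiplier b"
  shows "multiplier (a * b)"
  unfolding multiplier_def
proof (intro ballI conjI impI)
  fix B assume B: "B \<in> P"
  define U where "U = (\<lambda>x. x ^ a) ` B"
  have img: "(\<lambda>x. x ^ (a * b)) ` B = (\<lambda>x. x ^ b) ` U"
    unfolding U_def by (simp add: image_image power_mult)
  have cover: "\<exists>C\<in>P. u \<in> C \<and> C \<subseteq> U" if "u \<in> U" for u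
  proof -
    have "u \<in> \<Union>P" using that multiplier_image_sub[OF a B] blocks_cover unfolding U_def by blast
    then obtain C where C: "C \<in> P" "u \<in> C" by blast
    hence "C \<subseteq> U" using multiplier_block_sub[OF a B C(1)] that unfolding U_def by blast
    thus ?thesis using C by blast
  qed
  show "(\<lambda>x. x ^ (a * b)) ` B \<subseteq> G - {1}"
  proof
    fix w assume "w \<in> (\<lambda>x. x ^ (a * b)) ` B"
    then obtain u where u: "u \<in> U" "w = u ^ b" using img by auto
    then obtain C where "C \<in> P" "u \<in> C" using cover by blast
    thus "w \<in> G - {1}" using multiplier_image_sub[OF b] u(2) by blast
  qed
  fix C assume C: "C \<in> P" "C \<inter> (\<lambda>x. x ^ (a * b)) ` B \<noteq> {}"
  then obtain u where u: "u \<in> U" "u ^ b \<in> C" using img by auto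
  then obtain C' where C': "C' \<in> P" "u \<in> C'" "C' \<subseteq> U" using cover by blast
  have "C \<inter> (\<lambda>x. x ^ b) ` C' \<noteq> {}" using u(2) C'(2) by blast
  hence "C \<subseteq> (\<lambda>x. x ^ b) ` C'" using multiplier_block_sub[OF b C'(1) C(1)] by blast
  also have "\<dots> \<subseteq> (\<lambda>x. x ^ (a * b)) ` B" using C'(3) img by blast
  finally show "C \<subseteq> (\<lambda>x. x ^ (a * b)) ` B" .
qed

lemma multiplier_coprime:
  assumes "m > 0" "coprime m N"
  shows "multiplier m"
  using assms
proof (induction m rule: less_induct)
  case (less m)
  show ?case
  proof (cases "m = 1")
    case True thus ?thesis using multiplier_1 by simp
  next
    case False
    then obtain q where q: "prime q" "q dvd m" using prime_factor_nat by blast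
    from q(2) obtain m' where m': "m = q * m'" by (rule dvdE)
    have "m' > 0" using less.prems(1) m' by simp
    moreover have "m' < m" using \<open>m' > 0\<close> m' prime_gt_1_nat[OF q(1)] by simp
    moreover have "coprime m' N" "coprime q N" using less.prems(2) m' by simp_all
    ultimately show ?thesis
      using less.IH[of m'] prime_multiplier[OF q(1)] multiplier_mult m' by simp
  qed
qed

text \<open>Schur's multiplier theorem: for m coprime to N, x \<mapsto> x^m maps each block onto a block.
  The inverse exponent m^(phi N - 1) upgrades the inclusion C \<subseteq> B^m to an equality.\<close>
theorem multiplier_maps_block:
  assumes m: "m > 0" "coprime m N" and B: "B \<in> P"
  shows "(\<lambda>x. x ^ m) ` B \<in> P"
proof -
  define m' where "m' = m ^ (totient N - 1)"
  have M: "multiplier m" using multiplier_coprime[OF m] .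
  have M': "multiplier m'" using m unfolding m'_def by (intro multiplier_coprime) simp_all
  have inverse: "(x ^ m) ^ m' = x" if "x \<in> G" for x
    unfolding m'_def using mu_power_inverse[OF m(2) N_pos that] .
  obtain b where b: "b \<in> B" using block_nonempty[OF B] by blast
  have "b ^ m \<in> G - {1}" using multiplier_image_sub[OF M B] b by blast
  then obtain C where C: "C \<in> P" "b ^ m \<in> C" using blocks_cover by blast
  have C_sub: "C \<subseteq> (\<lambda>x. x ^ m) ` B"
    using multiplier_block_sub[OF M B C(1)] C(2) b by blast
  have "b \<in> G" using block_subset[OF B] b by blast
  hence "b = (b ^ m) ^ m'" by (rule inverse[symmetric])
  hence "b \<in> B \<inter> (\<lambda>x. x ^ m') ` C" using b C(2) by blast
  hence B_sub: "B \<subseteq> (\<lambda>x. x ^ m') ` C" using multiplier_block_sub[OF M' C(1) B] by blast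
  have "(\<lambda>x. x ^ m) ` B \<subseteq> C"
  proof
    fix w assume "w \<in> (\<lambda>x. x ^ m) ` B"
    then obtain c where c: "c \<in> C" "w = (c ^ m') ^ m" using B_sub by blast
    have "(c ^ m') ^ m = (c ^ m) ^ m'" by (simp add: mult.commute flip: power_mult)
    also have "\<dots> = c" using block_subset[OF C(1)] c(1) by (intro inverse) blast
    finally show "w \<in> C" using c by simp
  qed
  thus ?thesis using C_sub C(1) by simp
qed

corollary block_power_iff:
  assumes m: "m > 0" "coprime m N" and B: "B \<in> P" "b \<in> B" "b ^ m \<in> B" and w: "w \<in> G"
  shows "w ^ m \<in> B \<longleftrightarrow> w \<in> B"
proof -
  have image: "(\<lambda>x. x ^ m) ` B = B"
    using block_eq[OF multiplier_maps_block[OF m B(1)] B(1)] B(2,3) by blast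
  show ?thesis
  proof
    assume "w ^ m \<in> B"
    then obtain x where x: "x \<in> B" "w ^ m = x ^ m" using image by force
    have "x \<in> G" using block_subset[OF B(1)] x(1) by blast
    hence "w = x" using inj_onD[OF mu_power_inj[OF m(2) N_pos] x(2) w] by simp
    thus "w \<in> B" using x(1) by simp
  next
    assume "w \<in> B"
    thus "w ^ m \<in> B" using image by force
  qed
qed

theorem return_time_dvd_totient:
  assumes A: "A \<in> P" "y \<in> A" and m: "m > 0" "coprime m N"
    and M: "M > 0" "y \<in> mu M" "coprime m M"
  shows "(LEAST u. 0 < u \<and> y ^ (m ^ u) \<in> A) dvd totient M"
proof (rule least_return_time_dvd)
  show "y ^ (m ^ totient M) \<in> A" using mu_power_totient[OF M(3,2)] A(2) by simp
  show "0 < totient M" using M(1) by simp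
next
  fix u d assume d: "0 < d" "y ^ (m ^ d) \<in> A" "y ^ (m ^ (u + d)) \<in> A"
  have "m ^ d > 0" "coprime (m ^ d) N" using m by simp_all
  moreover have "(y ^ (m ^ u)) ^ (m ^ d) \<in> A" using d(3) by (simp add: power_add power_mult)
  moreover have "y \<in> G" "y ^ (m ^ u) \<in> G" using block_subset[OF A(1)] A(2) mu_power by blast+
  ultimately show "y ^ (m ^ u) \<in> A" using block_power_iff[OF _ _ A d(2)] by blast
qed

end


theorem mainTheorem6:
  fixes p n k :: nat and \<alpha> :: int and P :: "complex set set" and A :: "complex set" and y :: complex
  assumes "prime p" and "odd p" and "n \<ge> 1"
    and "coprime \<alpha> (int p)"
    and "\<forall>b::int. coprime b (int p ^ n) \<longrightarrow> (\<exists>m::nat. [\<alpha> ^ m = b] (mod (int p ^ n)))"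
    and "unital_partition (mu (p ^ n)) P"
    and "k \<le> n"
    and "A \<in> Pk (mu (p ^ n)) P p k"
    and "y \<in> A \<inter> Bk (mu (p ^ n)) p k"
  shows "(LEAST u::nat. u > 0 \<and> y powi (\<alpha> ^ u) \<in> A) dvd totient (p ^ (n - k))"
proof -
  define N where "N = p ^ n"
  have p: "p > 1" using assms(1) prime_gt_1_nat by blast
  interpret unital_partition_mu N P
    using assms(6) p by unfold_locales (simp_all add: N_def)
  have A: "A \<in> P" "y \<in> A" using assms(8,9) unfolding Pk_def N_def by auto
  have y_G: "y \<in> mu N" using block_subset[OF A(1)] A(2) by blast
  have y_M: "y \<in> mu (p ^ (n - k))" using Bk_in_mu assms(7,9) by blast
  define m where "m = nat (\<alpha> mod int N)"
  have m_cong: "[int m = \<alpha>] (mod int N)" using N_pos by (simp add: m_def cong_def)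
  have "coprime (int m) (int p)"
    using cong_imp_coprime[OF cong_sym[OF cong_dvd_modulus[OF m_cong]] assms(4)] assms(3)
    by (simp add: N_def)
  hence m_p: "coprime m p" by simp
  have m_pos: "m > 0" using m_p p by (cases "m = 0") auto
  have "(LEAST u. u > 0 \<and> y powi (\<alpha> ^ u) \<in> A) = (LEAST u. 0 < u \<and> y ^ (m ^ u) \<in> A)"
    using mu_powi_power[OF y_G N_pos m_cong] by simp
  also have "\<dots> dvd totient (p ^ (n - k))"
    using return_time_dvd_totient[OF A m_pos _ _ y_M] m_p p by (simp add: N_def)
  finally show ?thesis .
qed

end
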